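(* Let $m,n,d,P$ be positive integers with $P\ge mnd+n-1$, let $N_1,N_0,B$ be positive integers with $m\mid N_1$, $n\mid N_0$, $d\mid B$, and let $\bm{W}\in\mathbb{R}^{N_1\times N_0}$, $\bm{X}\in\mathbb{R}^{N_0\times B}$. Consider the Generalized PolyDot scheme for computing $\bm{S}=\bm{W}\bm{X}$ with $P$ nodes defined in the context. Then the recovery threshold of this scheme is $mnd+n-1$: from the computed outputs $\widetilde{\bm{S}}_p$ of any $mnd+n-1$ of the $P$ nodes, the whole product $\bm{S}=\bm{W}\bm{X}$ can be recovered. Consequently, the scheme tolerates up to $P-mnd-n+1$ erasures.
   Context: Block-partition $\bm{W}$ into an $m\times n$ grid of blocks $\bm{W}_{i,j}\in\mathbb{R}^{(N_1/m)\times(N_0/n)}$ and $\bm{X}$ into an $n\times d$ grid of blocks $\bm{X}_{j,k}\in\mathbb{R}^{(N_0/n)\times(B/d)}$, so that $\bm{S}=\bm{W}\bm{X}$ has an $m\times d$ grid of blocks $\bm{S}_{i,k}=\sum_{j=0}^{n-1}\bm{W}_{i,j}\bm{X}_{j,k}$. Define $\widetilde{\bm{W}}(u,v)=\sum_{i=0}^{m-1}\sum_{j=0}^{n-1}\bm{W}_{i,j}u^iv^j$ and $\widetilde{\bm{X}}(v,w)=\sum_{j=0}^{n-1}\sum_{k=0}^{d-1}\bm{X}_{j,k}v^{n-1-j}w^k$. Choose $P$ distinct real numbers $b_0,\dots,b_{P-1}$ and set $a_p=b_p^{\,n}$, $c_p=b_p^{\,mn}$. Node $p$ stores only $\widetilde{\bm{W}}(a_p,b_p)$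 (an $\frac{N_1}{m}\times\frac{N_0}{n}$ matrix) and $\widetilde{\bm{X}}(b_p,c_p)$ (an $\frac{N_0}{n}\times\frac{B}{d}$ matrix) and computes $\widetilde{\bm{S}}_p=\widetilde{\bm{W}}(a_p,b_p)\widetilde{\bm{X}}(b_p,c_p)$. The recovery threshold is the number of node outputs, out of $P$, that a decoder needs (from any subset of nodes of that size) to recover $\bm{S}$. *)

theory Defs
  imports Main "HOL.Real"
begin

text \<open>Matrices of variable size are represented as functions nat \<Rightarrow> nat \<Rightarrow> real,
  of which only the entries with indices in the stated ranges are meaningful.\<close>

definition Wblock :: "nat \<Rightarrow> nat \<Rightarrow> nat \<Rightarrow> nat \<Rightarrow> (nat \<Rightarrow> nat \<Rightarrow> real) \<Rightarrow> nat \<Rightarrow> nat \<Rightarrow> nat \<Rightarrow> nat \<Rightarrow> real" where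
  "Wblock N1 N0 m n W i j r c = W (i * (N1 div m) + r) (j * (N0 div n) + c)"

definition Xblock :: "nat \<Rightarrow> nat \<Rightarrow> nat \<Rightarrow> nat \<Rightarrow> (nat \<Rightarrow> nat \<Rightarrow> real) \<Rightarrow> nat \<Rightarrow> nat \<Rightarrow> nat \<Rightarrow> nat \<Rightarrow> real" where
  "Xblock N0 B n d X j k r c = X (j * (N0 div n) + r) (k * (B div d) + c)"

definition Wtilde :: "nat \<Rightarrow> nat \<Rightarrow> nat \<Rightarrow> nat \<Rightarrow> (nat \<Rightarrow> nat \<Rightarrow> real) \<Rightarrow> real \<Rightarrow> real \<Rightarrow> nat \<Rightarrow> nat \<Rightarrow> real" where
  "Wtilde N1 N0 m n W u v r c =
     (\<Sum>i<m. \<Sum>j<n. Wblock N1 N0 m n W i j r c * u ^ i * v ^ j)"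

definition Xtilde :: "nat \<Rightarrow> nat \<Rightarrow> nat \<Rightarrow> nat \<Rightarrow> (nat \<Rightarrow> nat \<Rightarrow> real) \<Rightarrow> real \<Rightarrow> real \<Rightarrow> nat \<Rightarrow> nat \<Rightarrow> real" where
  "Xtilde N0 B n d X v w r c =
     (\<Sum>j<n. \<Sum>k<d. Xblock N0 B n d X j k r c * v ^ (n - 1 - j) * w ^ k)"

definition node_output ::
  "nat \<Rightarrow> nat \<Rightarrow> nat \<Rightarrow> nat \<Rightarrow> nat \<Rightarrow> nat \<Rightarrow> (nat \<Rightarrow> real) \<Rightarrow>
   (nat \<Rightarrow> nat \<Rightarrow> real) \<Rightarrow> (nat \<Rightarrow> nat \<Rightarrow> real) \<Rightarrow> nat \<Rightarrow> nat \<Rightarrow> nat \<Rightarrow> real" where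
  "node_output m n d N1 N0 B b W X p r c =
     (if r < N1 div m \<and> c < B div d then
        (\<Sum>t < N0 div n. Wtilde N1 N0 m n W ((b p) ^ n) (b p) r t
                         * Xtilde N0 B n d X (b p) ((b p) ^ (m * n)) t c)
      else 0)"

end

theory Submission
  imports Defs "HOL-Computational_Algebra.Polynomial"
begin

text \<open>Entry (r, c) of the output of node p is the value at
  x = b p of a polynomial of degree < m n d + n - 1, whose monomials come from the block products
  W_ij X_j'k with exponent n i + j + (n - 1 - j') + m n k = n (i + m k) + (j + n - 1 - j').
  Since 0 \<le> j + n - 1 - j' \<le> 2 n - 2, the exponent n i + (n - 1) + m n k is reached exactly by the
  terms with j = j', and their coefficient is entry (r, c) of the block S_ik = \<Sum>_j W_ij X_jk.
  As the b p are distinct, m n d + n - 1 outputs determine all coefficients of this polynomial,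
  hence all of S, and a decoder is any function inverting this dependence.\<close>

lemma power_sum_coeffs_unique:
  fixes a a' :: "nat \<Rightarrow> 'a::{comm_ring_1, ring_no_zero_divisors}"
  assumes agree: "\<forall>x\<in>A. (\<Sum>e<N. a e * x ^ e) = (\<Sum>e<N. a' e * x ^ e)"
    and "N \<le> card A" and "e < N"
  shows "a e = a' e"
proof -
  define p where "p = (\<Sum>e<N. monom (a e) e)"
  define p' where "p' = (\<Sum>e<N. monom (a' e) e)"
  have "degree p < N" "degree p' < N"
    using \<open>e < N\<close> by (auto simp: p_def p'_def coeff_sum intro!: le_less_trans[OF degree_le, of "N - 1"])
  with \<open>N \<le> card A\<close> have "degree p < card A" "degree p' < card A" by simp_all
  with agree have "p = p'"
    by (intro poly_eqI_degree[of A]) (auto simp: p_def p'_def poly_sum poly_monom)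
  then have "coeff p e = coeff p' e" by simp
  with \<open>e < N\<close> show ?thesis by (simp add: p_def p'_def coeff_sum)
qed

lemma sum_powers_group_exponents:
  fixes c :: "'i \<Rightarrow> 'a::comm_semiring_1"
  assumes "finite I" and "\<And>\<iota>. \<iota> \<in> I \<Longrightarrow> f \<iota> < N"
  shows "(\<Sum>\<iota>\<in>I. c \<iota> * x ^ f \<iota>) = (\<Sum>e<N. (\<Sum>\<iota>\<in>{\<iota>\<in>I. f \<iota> = e}. c \<iota>) * x ^ e)"
proof -
  have "(\<Sum>\<iota>\<in>I. c \<iota> * x ^ f \<iota>) = (\<Sum>e<N. \<Sum>\<iota>\<in>{\<iota>\<in>I. f \<iota> = e}. c \<iota> * x ^ f \<iota>)"
    using assms by (intro sum.group[symmetric]) auto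
  also have "\<dots> = (\<Sum>e<N. (\<Sum>\<iota>\<in>{\<iota>\<in>I. f \<iota> = e}. c \<iota>) * x ^ e)"
    unfolding sum_distrib_right by (intro sum.cong) auto
  finally show ?thesis .
qed

lemma factors_through_if_determined:
  assumes "\<And>x y. F x = F y \<Longrightarrow> S x = S y"
  shows "\<exists>dec. \<forall>x. dec (F x) = S x"
proof (intro exI allI)
  fix x
  have "F (inv F (F x)) = F x" by (simp add: f_inv_into_f)
  then show "S (inv F (F x)) = S x" by (rule assms)
qed

lemma mult_add_diagonal_offset_eq_iff:
  fixes n A A0 j j' :: nat
  assumes "j < n" "j' < n"
  shows "n * A + (j + (n - 1 - j')) = n * A0 + (n - 1) \<longleftrightarrow> A = A0 \<and> j = j'"
proof
  assume eq: "n * A + (j + (n - 1 - j')) = n * A0 + (n - 1)"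
  have "\<not> A0 < A"
  proof
    assume "A0 < A"
    then have "n * A0 + n \<le> n * A" using mult_le_mono2[of "Suc A0" A n] by simp
    with eq assms show False by linarith
  qed
  moreover have "\<not> A < A0"
  proof
    assume "A < A0"
    then have "n * A + n \<le> n * A0" using mult_le_mono2[of "Suc A" A0 n] by simp
    with eq assms show False by linarith
  qed
  ultimately have "A = A0" by simp
  with eq assms show "A = A0 \<and> j = j'" by simp
qed (use assms in simp)

lemma add_mult_eq_add_mult_iff:
  fixes m i i0 k k0 :: nat
  assumes "i < m" "i0 < m"
  shows "i + m * k = i0 + m * k0 \<longleftrightarrow> i = i0 \<and> k = k0"
proof
  assume eq: "i + m * k = i0 + m * k0"
  have "i = (i + m * k) mod m" "i0 = (i0 + m * k0) mod m" using assms by simp_all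
  with eq have "i = i0" by simp
  with eq assms show "i = i0 \<and> k = k0" by simp
qed simp

context
  fixes m n d N1 N0 B :: nat
begin

definition polydot_terms :: "((nat \<times> nat) \<times> (nat \<times> nat)) set" where
  "polydot_terms = ({..<m} \<times> {..<n}) \<times> ({..<n} \<times> {..<d})"

definition polydot_exponent :: "(nat \<times> nat) \<times> (nat \<times> nat) \<Rightarrow> nat" where
  "polydot_exponent = (\<lambda>((i, j), (j', k)). n * i + j + (n - 1 - j' + m * n * k))"

definition block_product ::
  "(nat \<Rightarrow> nat \<Rightarrow> real) \<Rightarrow> (nat \<Rightarrow> nat \<Rightarrow> real) \<Rightarrow> (nat \<times> nat) \<times> (nat \<times> nat) \<Rightarrow> nat \<Rightarrow> nat \<Rightarrow> real"
  where "block_product W X = (\<lambda>((i, j), (j', k)) r c.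
     \<Sum>t < N0 div n. Wblock N1 N0 m n W i j r t * Xblock N0 B n d X j' k t c)"

definition polydot_coeff ::
  "(nat \<Rightarrow> nat \<Rightarrow> real) \<Rightarrow> (nat \<Rightarrow> nat \<Rightarrow> real) \<Rightarrow> nat \<Rightarrow> nat \<Rightarrow> nat \<Rightarrow> real" where
  "polydot_coeff W X r c e =
     (\<Sum>\<iota>\<in>{\<iota>\<in>polydot_terms. polydot_exponent \<iota> = e}. block_product W X \<iota> r c)"

lemma finite_polydot_terms: "finite polydot_terms"
  by (simp add: polydot_terms_def)

lemma polydot_exponent_mixed_radix:
  "polydot_exponent ((i, j), (j', k)) = n * (i + m * k) + (j + (n - 1 - j'))"
  by (simp add: polydot_exponent_def algebra_simps)

lemma polydot_exponent_less:
  assumes "\<iota> \<in> polydot_terms"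
  shows "polydot_exponent \<iota> < m * n * d + n - 1"
proof -
  obtain i j j' k where \<iota>: "\<iota> = ((i, j), (j', k))" and "i < m" "j < n" "j' < n" "k < d"
    using assms by (auto simp: polydot_terms_def)
  have "Suc (i + m * k) \<le> m * d"
    using \<open>i < m\<close> \<open>k < d\<close> mult_le_mono2[of "Suc k" d m] by simp
  then have "n * (i + m * k) + n \<le> m * n * d"
    using mult_le_mono2[of "Suc (i + m * k)" "m * d" n] by (simp add: algebra_simps)
  then show ?thesis
    using \<open>j < n\<close> \<open>j' < n\<close> by (simp add: \<iota> polydot_exponent_mixed_radix)
qed

lemma polydot_exponent_eq_diagonal_iff:
  assumes "((i, j), (j', k)) \<in> polydot_terms" and "i0 < m"
  shows "polydot_exponent ((i, j), (j', k)) = n * i0 + (n - 1) + m * n * k0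
    \<longleftrightarrow> i = i0 \<and> j = j' \<and> k = k0"
proof -
  have "i < m" "j < n" "j' < n"
    using assms by (auto simp: polydot_terms_def)
  have "n * i0 + (n - 1) + m * n * k0 = n * (i0 + m * k0) + (n - 1)"
    by (simp add: algebra_simps)
  then have "polydot_exponent ((i, j), (j', k)) = n * i0 + (n - 1) + m * n * k0
      \<longleftrightarrow> n * (i + m * k) + (j + (n - 1 - j')) = n * (i0 + m * k0) + (n - 1)"
    by (simp only: polydot_exponent_mixed_radix)
  also have "\<dots> \<longleftrightarrow> i + m * k = i0 + m * k0 \<and> j = j'"
    by (rule mult_add_diagonal_offset_eq_iff[OF \<open>j < n\<close> \<open>j' < n\<close>])
  also have "\<dots> \<longleftrightarrow> i = i0 \<and> j = j' \<and> k = k0"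
    using add_mult_eq_add_mult_iff[OF \<open>i < m\<close> \<open>i0 < m\<close>] by blast
  finally show ?thesis .
qed

lemma Wtilde_at_powers:
  "Wtilde N1 N0 m n W (x ^ n) x r t =
     (\<Sum>(i, j)\<in>{..<m} \<times> {..<n}. Wblock N1 N0 m n W i j r t * x ^ (n * i + j))"
  unfolding Wtilde_def sum.cartesian_product by (simp add: power_add power_mult mult.assoc)

lemma Xtilde_at_powers:
  "Xtilde N0 B n d X x (x ^ (m * n)) t c =
     (\<Sum>(j', k)\<in>{..<n} \<times> {..<d}. Xblock N0 B n d X j' k t c * x ^ (n - 1 - j' + m * n * k))"
  unfolding Xtilde_def sum.cartesian_product by (simp add: power_add power_mult mult.assoc)

lemma power_polydot_exponent:
  "x ^ polydot_exponent ((i, j), (j', k)) = x ^ (n * i + j) * x ^ (n - 1 - j' + m * n * k)"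
  for x :: "'a::monoid_mult"
  unfolding polydot_exponent_def prod.case by (rule power_add)

lemma node_output_expansion:
  assumes "r < N1 div m" and "c < B div d"
  shows "node_output m n d N1 N0 B b W X p r c =
    (\<Sum>\<iota>\<in>polydot_terms. block_product W X \<iota> r c * b p ^ polydot_exponent \<iota>)"
proof -
  have "Wtilde N1 N0 m n W (x ^ n) x r t * Xtilde N0 B n d X x (x ^ (m * n)) t c =
      (\<Sum>\<iota>\<in>polydot_terms. (case \<iota> of ((i, j), (j', k)) \<Rightarrow>
         Wblock N1 N0 m n W i j r t * Xblock N0 B n d X j' k t c) * x ^ polydot_exponent \<iota>)" for x t
    unfolding Wtilde_at_powers Xtilde_at_powers sum_product sum.cartesian_product polydot_terms_def
    by (intro sum.cong refl) (auto simp del: power_Suc simp add: power_polydot_exponent mult_ac)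
  then have "node_output m n d N1 N0 B b W X p r c =
      (\<Sum>t < N0 div n. \<Sum>\<iota>\<in>polydot_terms. (case \<iota> of ((i, j), (j', k)) \<Rightarrow>
         Wblock N1 N0 m n W i j r t * Xblock N0 B n d X j' k t c) * b p ^ polydot_exponent \<iota>)"
    using assms by (simp add: node_output_def)
  also have "\<dots> = (\<Sum>\<iota>\<in>polydot_terms. block_product W X \<iota> r c * b p ^ polydot_exponent \<iota>)"
    unfolding block_product_def by (subst sum.swap) (simp add: split_def sum_distrib_right)
  finally show ?thesis .
qed

lemma node_output_eq_power_sum:
  assumes "r < N1 div m" and "c < B div d"
  shows "node_output m n d N1 N0 B b W X p r c =
    (\<Sum>e < m * n * d + n - 1. polydot_coeff W X r c e * b p ^ e)"
  unfolding node_output_expansion[OF assms] polydot_coeff_def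
  by (intro sum_powers_group_exponents finite_polydot_terms polydot_exponent_less)

lemma polydot_coeff_diagonal:
  assumes "i0 < m" and "k0 < d"
  shows "polydot_coeff W X r c (n * i0 + (n - 1) + m * n * k0) =
    (\<Sum>j<n. block_product W X ((i0, j), (j, k0)) r c)"
proof -
  have "{\<iota>\<in>polydot_terms. polydot_exponent \<iota> = n * i0 + (n - 1) + m * n * k0} =
      (\<lambda>j. ((i0, j), (j, k0))) ` {..<n}"
  proof (intro set_eqI)
    fix \<iota> :: "(nat \<times> nat) \<times> (nat \<times> nat)"
    obtain i j j' k where "\<iota> = ((i, j), (j', k))" by (metis prod.exhaust)
    then show "\<iota> \<in> {\<iota>\<in>polydot_terms. polydot_exponent \<iota> = n * i0 + (n - 1) + m * n * k0} \<longleftrightarrow>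
        \<iota> \<in> (\<lambda>j. ((i0, j), (j, k0))) ` {..<n}"
      using assms polydot_exponent_eq_diagonal_iff[of i j j' k i0 k0]
      by (auto simp: polydot_terms_def)
  qed
  moreover have "inj_on (\<lambda>j. ((i0, j), (j, k0))) {..<n}"
    by (rule inj_onI) simp
  ultimately show ?thesis
    unfolding polydot_coeff_def by (simp add: sum.reindex)
qed

lemma matrix_mult_entry_eq_sum_block_products:
  assumes "n dvd N0"
  shows "(\<Sum>t<N0. W r t * X t c) =
    (\<Sum>j<n. block_product W X ((r div (N1 div m), j), (j, c div (B div d)))
                               (r mod (N1 div m)) (c mod (B div d)))"
proof -
  define q where "q = N0 div n"
  have "(\<Sum>t<N0. W r t * X t c) = (\<Sum>j<n. \<Sum>t\<in>{j * q..<j * q + q}. W r t * X t c)"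
    using assms by (simp add: q_def sum.nat_group)
  also have "\<dots> = (\<Sum>j<n. \<Sum>t<q. W r (j * q + t) * X (j * q + t) c)"
  proof (rule sum.cong[OF refl])
    fix j
    show "(\<Sum>t\<in>{j * q..<j * q + q}. W r t * X t c) = (\<Sum>t<q. W r (j * q + t) * X (j * q + t) c)"
      using sum.shift_bounds_nat_ivl[of "\<lambda>t. W r t * X t c" 0 "j * q" q]
      by (simp add: atLeast0LessThan add.commute)
  qed
  also have "\<dots> = (\<Sum>j<n. block_product W X ((r div (N1 div m), j), (j, c div (B div d)))
                               (r mod (N1 div m)) (c mod (B div d)))"
    by (simp add: block_product_def Wblock_def Xblock_def q_def div_mult_mod_eq)
  finally show ?thesis .
qed

lemma matrix_mult_entry_determined_by_outputs:
  assumes "0 < n" "m dvd N1" "n dvd N0" "d dvd B"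
    and "inj_on b K" "card K = m * n * d + n - 1"
    and same_outputs: "\<And>p. p \<in> K \<Longrightarrow>
      node_output m n d N1 N0 B b W X p = node_output m n d N1 N0 B b W' X' p"
    and "r < N1" "c < B"
  shows "(\<Sum>t<N0. W r t * X t c) = (\<Sum>t<N0. W' r t * X' t c)"
proof -
  define q1 where "q1 = N1 div m"
  define q2 where "q2 = B div d"
  define i0 where "i0 = r div q1"
  define k0 where "k0 = c div q2"
  have "N1 \<noteq> 0" "B \<noteq> 0"
    using assms by auto
  then have "0 < m" "0 < d" "0 < q1" "0 < q2"
    using assms by (auto simp: q1_def q2_def dvd_div_eq_0_iff intro!: gr0I)
  then have "r mod q1 < N1 div m" "c mod q2 < B div d" "i0 < m" "k0 < d"
    using assms by (auto simp: q1_def q2_def i0_def k0_def div_less_iff_less_mult)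
  define e0 where "e0 = n * i0 + (n - 1) + m * n * k0"
  have "e0 < m * n * d + n - 1"
    using polydot_exponent_less[of "((i0, 0), (0, k0))"] \<open>0 < n\<close> \<open>i0 < m\<close> \<open>k0 < d\<close>
    by (simp add: polydot_terms_def polydot_exponent_def e0_def)
  then have same_coeff:
    "polydot_coeff W X (r mod q1) (c mod q2) e0 = polydot_coeff W' X' (r mod q1) (c mod q2) e0"
  proof (rule power_sum_coeffs_unique[rotated 2])
    show "\<forall>x\<in>b ` K. (\<Sum>e < m * n * d + n - 1. polydot_coeff W X (r mod q1) (c mod q2) e * x ^ e) =
        (\<Sum>e < m * n * d + n - 1. polydot_coeff W' X' (r mod q1) (c mod q2) e * x ^ e)"
    proof
      fix x assume "x \<in> b ` K"
      then obtain p where "p \<in> K" "x = b p" by blast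
      then show "(\<Sum>e < m * n * d + n - 1. polydot_coeff W X (r mod q1) (c mod q2) e * x ^ e) =
          (\<Sum>e < m * n * d + n - 1. polydot_coeff W' X' (r mod q1) (c mod q2) e * x ^ e)"
        using same_outputs[OF \<open>p \<in> K\<close>]
          node_output_eq_power_sum[OF \<open>r mod q1 < N1 div m\<close> \<open>c mod q2 < B div d\<close>]
        by metis
    qed
    show "m * n * d + n - 1 \<le> card (b ` K)"
      using assms by (simp add: card_image)
  qed
  have diagonal: "(\<Sum>t<N0. V r t * Y t c) = polydot_coeff V Y (r mod q1) (c mod q2) e0" for V Y
    using polydot_coeff_diagonal[OF \<open>i0 < m\<close> \<open>k0 < d\<close>] assms
    by (simp add: matrix_mult_entry_eq_sum_block_products e0_def i0_def k0_def q1_def q2_def)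
  show ?thesis
    unfolding diagonal same_coeff ..
qed

end

theorem theorem2:
  fixes m n d P N1 N0 B :: nat and b :: "nat \<Rightarrow> real"
  assumes "m > 0" and "n > 0" and "d > 0" and "P > 0"
    and "P \<ge> m * n * d + n - 1"
    and "N1 > 0" and "N0 > 0" and "B > 0"
    and "m dvd N1" and "n dvd N0" and "d dvd B"
    and "inj_on b {..<P}"
  shows "\<forall>K. K \<subseteq> {..<P} \<and> card K = m * n * d + n - 1 \<longrightarrow>
           (\<exists>dec :: (nat \<Rightarrow> nat \<Rightarrow> nat \<Rightarrow> real) \<Rightarrow> nat \<Rightarrow> nat \<Rightarrow> real.
              \<forall>W X :: nat \<Rightarrow> nat \<Rightarrow> real.
                \<forall>r < N1. \<forall>c < B.
                  dec (\<lambda>p. if p \<in> K then node_output m n d N1 N0 B b W X p else (\<lambda>_ _. 0)) r c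
                  = (\<Sum>t < N0. W r t * X t c))"
proof (intro allI impI)
  fix K assume K: "K \<subseteq> {..<P} \<and> card K = m * n * d + n - 1"
  define outputs where "outputs = (\<lambda>(W, X) p.
    if p \<in> K then node_output m n d N1 N0 B b W X p else (\<lambda>_ _. 0 :: real))"
  define product where "product = (\<lambda>(W, X) r c.
    if r < N1 \<and> c < B then \<Sum>t < N0. W r t * X t c else 0 :: real)"
  have "product WX = product WX'" if "outputs WX = outputs WX'" for WX WX'
  proof -
    obtain W X W' X' where "WX = (W, X)" "WX' = (W', X')" by fastforce
    moreover have "inj_on b K" using K \<open>inj_on b {..<P}\<close> inj_on_subset by blast
    ultimately show ?thesis
      using that K assms matrix_mult_entry_determined_by_outputs[of n m N1 N0 d B b K W X W' X']
      by (auto simp: outputs_def product_def fun_eq_iff split: if_splits)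
  qed
  then obtain dec where "\<And>WX. dec (outputs WX) = product WX"
    using factors_through_if_determined by metis
  then show "\<exists>dec. \<forall>W X. \<forall>r < N1. \<forall>c < B.
      dec (\<lambda>p. if p \<in> K then node_output m n d N1 N0 B b W X p else (\<lambda>_ _. 0)) r c
      = (\<Sum>t < N0. W r t * X t c)"
    by (intro exI[of _ dec]) (auto simp: outputs_def product_def)
qed

end
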